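(* Let $\Gamma\subseteq A$ be $\Bbbk$-algebras, $\sim$ an equivalence relation on $\mathrm{cfs}(\Gamma)$, and suppose $\Gamma$ is a Harish-Chandra block subalgebra of $A$ with respect to $\sim$. Let $V$ be an $A$-module and $v\in V$ with $\mathfrak m_1\cdots\mathfrak m_kv=0$, where $B\in\mathrm{cfs}(\Gamma)/{\sim}$ and $\mathfrak m_1,\dots,\mathfrak m_k\in B$. Then $$Av\subseteq\bigoplus_{C\in\bigcup_{i}\mathrm{Supp}(A/A\mathfrak m_i)}V(C).$$
   Context: $\mathrm{cfs}(\Gamma)$: maximal two-sided ideals $\mathfrak m$ of $\Gamma$ with $\dim\Gamma/\mathfrak m<\infty$. For a class $B$, $\mathcal W(B)=\{\mathfrak m_1\cdots\mathfrak m_k:k\ge0,\mathfrak m_i\in B\}$; for a $\Gamma$-module $V$, $V(B)=\{v:\mathfrak m v=0$ for some $\mathfrak m\in\mathcal W(B)\}$ (these sum directly). $V$ is a block module if $V=\bigoplus_BV(B)$; $\mathrm{Supp}(V)=\{B:V(B)\neq0\}$. $\Gamma$ is a Harish-Chandra block subalgebra of $A$ if the left $A$-module $A/A\mathfrak m$ is a block module over $\Gamma$ for every $B$ and every $\mathfrak m\in\mathcal W(B)$. *)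

theory Defs
  imports Complex_Main
begin

text \<open>A unital associative algebra over the field 'k: the ring 'a (the whole type is A)
  together with a scalar multiplication making it a 'k-vector space, compatible with the
  ring multiplication.\<close>
definition k_algebra :: "('k::field \<Rightarrow> 'a::ring_1 \<Rightarrow> 'a) \<Rightarrow> bool" where
  "k_algebra scale \<longleftrightarrow> vector_space scale \<and>
     (\<forall>c x y. scale c (x * y) = scale c x * y \<and> scale c (x * y) = x * scale c y)"

definition subalgebra :: "('k::field \<Rightarrow> 'a::ring_1 \<Rightarrow> 'a) \<Rightarrow> 'a set \<Rightarrow> bool" where
  "subalgebra scale G \<longleftrightarrow> 0 \<in> G \<and> 1 \<in> G \<and>
     (\<forall>x\<in>G. \<forall>y\<in>G. x + y \<in> G \<and> x * y \<in> G) \<and> (\<forall>c. \<forall>x\<in>G. scale c x \<in> G)"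

definition two_sided_ideal :: "'a::ring_1 set \<Rightarrow> 'a set \<Rightarrow> bool" where
  "two_sided_ideal G m \<longleftrightarrow> m \<subseteq> G \<and> 0 \<in> m \<and>
     (\<forall>x\<in>m. \<forall>y\<in>m. x + y \<in> m) \<and> (\<forall>x\<in>m. - x \<in> m) \<and>
     (\<forall>g\<in>G. \<forall>x\<in>m. g * x \<in> m \<and> x * g \<in> m)"

definition maximal_ideal :: "'a::ring_1 set \<Rightarrow> 'a set \<Rightarrow> bool" where
  "maximal_ideal G m \<longleftrightarrow> two_sided_ideal G m \<and> m \<noteq> G \<and>
     (\<forall>J. two_sided_ideal G J \<and> m \<subseteq> J \<longrightarrow> J = m \<or> J = G)"

definition finite_codim :: "('k::field \<Rightarrow> 'a::ring_1 \<Rightarrow> 'a) \<Rightarrow> 'a set \<Rightarrow> 'a set \<Rightarrow> bool" where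
  "finite_codim scale G m \<longleftrightarrow> (\<exists>S. finite S \<and> S \<subseteq> G \<and>
     G \<subseteq> {s + x | s x. s \<in> module.span scale S \<and> x \<in> m})"

definition cfs :: "('k::field \<Rightarrow> 'a::ring_1 \<Rightarrow> 'a) \<Rightarrow> 'a set \<Rightarrow> 'a set set" where
  "cfs scale G = {m. maximal_ideal G m \<and> finite_codim scale G m}"

definition ideal_mult :: "'a::ring_1 set \<Rightarrow> 'a set \<Rightarrow> 'a set" where
  "ideal_mult I J = {(\<Sum>i<n. f i * g i) | (n::nat) f g. \<forall>i<n. f i \<in> I \<and> g i \<in> J}"

fun ideal_prod :: "'a::ring_1 set \<Rightarrow> 'a set list \<Rightarrow> 'a set" where
  "ideal_prod G [] = G"
| "ideal_prod G (m # ms) = ideal_mult m (ideal_prod G ms)"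

definition words :: "'a::ring_1 set \<Rightarrow> 'a set set \<Rightarrow> 'a set set" where
  "words G B = {ideal_prod G ms | ms. set ms \<subseteq> B}"

text \<open>Modules are described by an action act on an abelian group 'v together with a
  predicate z singling out the elements that are zero in the module: z = (\<lambda>w. w = 0) for an
  honest module, z = (\<lambda>x. x \<in> L) for a quotient A/L by a left submodule L.\<close>

definition A_module :: "('a::ring_1 \<Rightarrow> 'v::ab_group_add \<Rightarrow> 'v) \<Rightarrow> bool" where
  "A_module act \<longleftrightarrow> (\<forall>x y v. act (x + y) v = act x v + act y v) \<and>
     (\<forall>x v w. act x (v + w) = act x v + act x w) \<and>
     (\<forall>x y v. act (x * y) v = act x (act y v)) \<and> (\<forall>v. act 1 v = v)"

definition part :: "'a::ring_1 set \<Rightarrow> ('a \<Rightarrow> 'v::ab_group_add \<Rightarrow> 'v) \<Rightarrow> ('v \<Rightarrow> bool)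
    \<Rightarrow> 'a set set \<Rightarrow> 'v set" where
  "part G act z B = {v. \<exists>m\<in>words G B. \<forall>x\<in>m. z (act x v)}"

definition block_sum :: "'a::ring_1 set \<Rightarrow> ('a \<Rightarrow> 'v::ab_group_add \<Rightarrow> 'v) \<Rightarrow> ('v \<Rightarrow> bool)
    \<Rightarrow> 'a set set set \<Rightarrow> 'v set" where
  "block_sum G act z Cs = {v. \<exists>Fs f. finite Fs \<and> Fs \<subseteq> Cs \<and>
      (\<forall>C\<in>Fs. f C \<in> part G act z C) \<and> z (v - (\<Sum>C\<in>Fs. f C))}"

definition block_module :: "('k::field \<Rightarrow> 'a::ring_1 \<Rightarrow> 'a) \<Rightarrow> 'a set \<Rightarrow> ('a set \<times> 'a set) set
    \<Rightarrow> ('a \<Rightarrow> 'v::ab_group_add \<Rightarrow> 'v) \<Rightarrow> ('v \<Rightarrow> bool) \<Rightarrow> bool" where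
  "block_module scale G R act z \<longleftrightarrow> (\<forall>v. v \<in> block_sum G act z (cfs scale G // R))"

definition Supp :: "('k::field \<Rightarrow> 'a::ring_1 \<Rightarrow> 'a) \<Rightarrow> 'a set \<Rightarrow> ('a set \<times> 'a set) set
    \<Rightarrow> ('a \<Rightarrow> 'v::ab_group_add \<Rightarrow> 'v) \<Rightarrow> ('v \<Rightarrow> bool) \<Rightarrow> 'a set set set" where
  "Supp scale G R act z = {C \<in> cfs scale G // R. \<exists>v \<in> part G act z C. \<not> z v}"

text \<open>The left A-module A/Am: A acting on itself by left multiplication, modulo the left
  ideal Am = ideal_mult UNIV m.\<close>
definition HC_block_subalgebra :: "('k::field \<Rightarrow> 'a::ring_1 \<Rightarrow> 'a) \<Rightarrow> 'a set
    \<Rightarrow> ('a set \<times> 'a set) set \<Rightarrow> bool" where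
  "HC_block_subalgebra scale G R \<longleftrightarrow>
     (\<forall>B \<in> cfs scale G // R. \<forall>m \<in> words G B.
        block_module scale G R (*) (\<lambda>x. x \<in> ideal_mult UNIV m))"

end

theory Submission
  imports Defs "HOL-Library.Set_Algebras"
begin

(* Write P = m_1 m_2 ... m_k. As A/AP is a block module, a = sum_C f_C modulo AP with f_C in
   (A/AP)(C); applied to v this gives av = sum_C f_C v with f_C v in V(C). It remains to show
   that f_C v = 0 unless C lies in some Supp(A/Am_i). This goes by induction on k, working
   modulo a submodule N throughout. Modulo N' = N + A m_2...m_k v the vector v is killed by
   m_2...m_k, so f_C v lies in N' by induction. Every element of A m_2...m_k v is killed by m_1,
   so the block decomposition of A/Am_1 places N' inside N + sum_D V(D), D in Supp(A/Am_1).
   Finally V(C) meets N + sum_{D <> C} V(D) only in N: words of distinct blocks are comaximal,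
   x + y = 1, and y kills the V(D)-components while x kills f_C v. *)

lemma ideal_mult_zero: "0 \<in> ideal_mult I J"
  unfolding ideal_mult_def by force

lemma ideal_mult_add_mult:
  assumes "a \<in> I" "b \<in> J" "y \<in> ideal_mult I J"
  shows "a * b + y \<in> ideal_mult I J"
proof -
  obtain n :: nat and f g where y: "y = (\<Sum>i<n. f i * g i)" "\<forall>i<n. f i \<in> I \<and> g i \<in> J"
    using assms(3) unfolding ideal_mult_def by blast
  have "a * b + y = (\<Sum>i<Suc n. case_nat a f i * case_nat b g i)"
    unfolding y sum.lessThan_Suc_shift by simp
  moreover have "\<forall>i<Suc n. case_nat a f i \<in> I \<and> case_nat b g i \<in> J"
    using assms(1,2) y(2) by (auto simp: less_Suc_eq_0_disj)
  ultimately show ?thesis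
    unfolding ideal_mult_def by blast
qed

lemma ideal_mult_induct [consumes 1, case_names zero add_mult]:
  assumes "x \<in> ideal_mult I J" and "P 0"
    and "\<And>a b y. a \<in> I \<Longrightarrow> b \<in> J \<Longrightarrow> P y \<Longrightarrow> P (a * b + y)"
  shows "P x"
proof -
  obtain n :: nat and f g where "x = (\<Sum>i<n. f i * g i)" "\<forall>i<n. f i \<in> I \<and> g i \<in> J"
    using assms(1) unfolding ideal_mult_def by blast
  then show ?thesis
  proof (induction n arbitrary: x f g)
    case 0
    then show ?case using assms(2) by simp
  next
    case (Suc n)
    have "P (\<Sum>i<n. f (Suc i) * g (Suc i))"
      using Suc.prems(2) by (intro Suc.IH) auto
    then have "P (f 0 * g 0 + (\<Sum>i<n. f (Suc i) * g (Suc i)))"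
      using Suc.prems(2) by (intro assms(3)) auto
    moreover have "x = f 0 * g 0 + (\<Sum>i<n. f (Suc i) * g (Suc i))"
      using Suc.prems(1) by (simp only: sum.lessThan_Suc_shift)
    ultimately show ?case by simp
  qed
qed

lemma ideal_mult_mem:
  assumes "a \<in> I" and "b \<in> J"
  shows "a * b \<in> ideal_mult I J"
  using ideal_mult_add_mult[OF assms ideal_mult_zero] by simp

lemma ideal_mult_add:
  assumes "x \<in> ideal_mult I J" "y \<in> ideal_mult I J"
  shows "x + y \<in> ideal_mult I J"
  using assms(1)
proof (induction rule: ideal_mult_induct)
  case zero
  then show ?case using assms(2) by simp
next
  case (add_mult a b x)
  have "a * b + (x + y) \<in> ideal_mult I J"
    by (rule ideal_mult_add_mult[OF add_mult])
  then show ?case by (simp add: add.assoc)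
qed

lemma two_sided_idealI:
  assumes "m \<subseteq> G" and "0 \<in> m" and "\<And>x y. x \<in> m \<Longrightarrow> y \<in> m \<Longrightarrow> x + y \<in> m"
    and "\<And>x. x \<in> m \<Longrightarrow> - x \<in> m"
    and "\<And>c x. c \<in> G \<Longrightarrow> x \<in> m \<Longrightarrow> c * x \<in> m"
    and "\<And>c x. c \<in> G \<Longrightarrow> x \<in> m \<Longrightarrow> x * c \<in> m"
  shows "two_sided_ideal G m"
  unfolding two_sided_ideal_def by (intro conjI ballI) (simp_all add: assms)

context
  fixes G m :: "'a::ring_1 set"
  assumes ideal: "two_sided_ideal G m"
begin

lemma two_sided_ideal_subset: "m \<subseteq> G"
  using ideal unfolding two_sided_ideal_def by blast

lemma two_sided_ideal_zero: "0 \<in> m"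
  using ideal unfolding two_sided_ideal_def by blast

lemma two_sided_ideal_add: "x \<in> m \<Longrightarrow> y \<in> m \<Longrightarrow> x + y \<in> m"
  using ideal unfolding two_sided_ideal_def by blast

lemma two_sided_ideal_neg: "x \<in> m \<Longrightarrow> - x \<in> m"
  using ideal unfolding two_sided_ideal_def by blast

lemma two_sided_ideal_mult_left: "c \<in> G \<Longrightarrow> x \<in> m \<Longrightarrow> c * x \<in> m"
  using ideal unfolding two_sided_ideal_def by blast

lemma two_sided_ideal_mult_right: "c \<in> G \<Longrightarrow> x \<in> m \<Longrightarrow> x * c \<in> m"
  using ideal unfolding two_sided_ideal_def by blast

end

lemma ideal_mult_subset:
  assumes I: "two_sided_ideal G I" and J: "J \<subseteq> G"
  shows "ideal_mult I J \<subseteq> I"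
proof
  fix x assume "x \<in> ideal_mult I J"
  then show "x \<in> I"
  proof (induction rule: ideal_mult_induct)
    case zero
    show ?case by (rule two_sided_ideal_zero[OF I])
  next
    case (add_mult a b y)
    then show ?case
      using J by (blast intro: two_sided_ideal_add[OF I] two_sided_ideal_mult_right[OF I])
  qed
qed

lemma two_sided_ideal_ideal_mult:
  assumes I: "two_sided_ideal G I" and J: "two_sided_ideal G J"
  shows "two_sided_ideal G (ideal_mult I J)"
proof (rule two_sided_idealI)
  show "ideal_mult I J \<subseteq> G"
    using ideal_mult_subset[OF I two_sided_ideal_subset[OF J]] two_sided_ideal_subset[OF I] by blast
  show "0 \<in> ideal_mult I J" by (rule ideal_mult_zero)
  show "x + y \<in> ideal_mult I J" if "x \<in> ideal_mult I J" "y \<in> ideal_mult I J" for x y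
    using that by (rule ideal_mult_add)
  show "- x \<in> ideal_mult I J" if "x \<in> ideal_mult I J" for x
    using that
  proof (induction rule: ideal_mult_induct)
    case (add_mult a b y)
    have eq: "- (a * b + y) = (- a) * b + (- y)" by simp
    show ?case
      unfolding eq by (rule ideal_mult_add_mult[OF two_sided_ideal_neg[OF I add_mult(1)] add_mult(2,3)])
  qed (simp add: ideal_mult_zero)
  show "c * x \<in> ideal_mult I J" if c: "c \<in> G" and "x \<in> ideal_mult I J" for c x
    using that(2)
  proof (induction rule: ideal_mult_induct)
    case (add_mult a b y)
    have eq: "c * (a * b + y) = (c * a) * b + c * y" by (simp add: algebra_simps)
    show ?case
      unfolding eq by (rule ideal_mult_add_mult[OF two_sided_ideal_mult_left[OF I c add_mult(1)] add_mult(2,3)])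
  qed (simp add: ideal_mult_zero)
  show "x * c \<in> ideal_mult I J" if c: "c \<in> G" and "x \<in> ideal_mult I J" for c x
    using that(2)
  proof (induction rule: ideal_mult_induct)
    case (add_mult a b y)
    have eq: "(a * b + y) * c = a * (b * c) + y * c" by (simp add: algebra_simps)
    show ?case
      unfolding eq
      by (rule ideal_mult_add_mult[OF add_mult(1) two_sided_ideal_mult_right[OF J c add_mult(2)] add_mult(3)])
  qed (simp add: ideal_mult_zero)
qed

lemma two_sided_ideal_ideal_prod:
  assumes "two_sided_ideal G G" and "\<forall>m\<in>set ms. two_sided_ideal G m"
  shows "two_sided_ideal G (ideal_prod G ms)"
  using assms(2) by (induction ms) (auto intro: assms(1) two_sided_ideal_ideal_mult)

lemma ideal_prod_singleton:
  assumes m: "two_sided_ideal G m" and "1 \<in> G"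
  shows "ideal_prod G [m] = m"
proof
  show "ideal_prod G [m] \<subseteq> m"
    using ideal_mult_subset[OF m] by simp
  show "m \<subseteq> ideal_prod G [m]"
    using ideal_mult_mem[of _ m 1 G] \<open>1 \<in> G\<close> by auto
qed

definition comaximal :: "'a::ring_1 set \<Rightarrow> 'a set \<Rightarrow> bool" where
  "comaximal I J \<longleftrightarrow> (\<exists>x\<in>I. \<exists>y\<in>J. x + y = 1)"

lemma comaximal_sym: "comaximal I J \<Longrightarrow> comaximal J I"
  unfolding comaximal_def by (metis add.commute)

lemma two_sided_ideal_plus:
  assumes G: "two_sided_ideal G G" and I: "two_sided_ideal G I" and J: "two_sided_ideal G J"
  shows "two_sided_ideal G (I + J)"
proof (rule two_sided_idealI)
  show "I + J \<subseteq> G"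
    using two_sided_ideal_subset[OF I] two_sided_ideal_subset[OF J] two_sided_ideal_add[OF G]
    by (auto elim!: set_plus_elim)
  show "0 \<in> I + J"
    using set_plus_intro[OF two_sided_ideal_zero[OF I] two_sided_ideal_zero[OF J]] by simp
  show "x + y \<in> I + J" if x: "x \<in> I + J" and y: "y \<in> I + J" for x y
  proof -
    obtain a b where ab: "x = a + b" "a \<in> I" "b \<in> J"
      using x by (rule set_plus_elim)
    obtain a' b' where ab': "y = a' + b'" "a' \<in> I" "b' \<in> J"
      using y by (rule set_plus_elim)
    have "(a + a') + (b + b') \<in> I + J"
      using two_sided_ideal_add[OF I ab(2) ab'(2)] two_sided_ideal_add[OF J ab(3) ab'(3)]
      by (rule set_plus_intro)
    then show ?thesis by (simp add: ab(1) ab'(1) algebra_simps)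
  qed
  show "- x \<in> I + J" if x: "x \<in> I + J" for x
  proof -
    obtain a b where ab: "x = a + b" "a \<in> I" "b \<in> J"
      using x by (rule set_plus_elim)
    have "(- a) + (- b) \<in> I + J"
      using two_sided_ideal_neg[OF I ab(2)] two_sided_ideal_neg[OF J ab(3)] by (rule set_plus_intro)
    then show ?thesis by (simp add: ab(1))
  qed
  show "c * x \<in> I + J" "x * c \<in> I + J" if c: "c \<in> G" and x: "x \<in> I + J" for c x
  proof -
    obtain a b where ab: "x = a + b" "a \<in> I" "b \<in> J"
      using x by (rule set_plus_elim)
    have "c * a + c * b \<in> I + J"
      using two_sided_ideal_mult_left[OF I c ab(2)] two_sided_ideal_mult_left[OF J c ab(3)]
      by (rule set_plus_intro)
    then show "c * x \<in> I + J" by (simp add: ab(1) distrib_left)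
    have "a * c + b * c \<in> I + J"
      using two_sided_ideal_mult_right[OF I c ab(2)] two_sided_ideal_mult_right[OF J c ab(3)]
      by (rule set_plus_intro)
    then show "x * c \<in> I + J" by (simp add: ab(1) distrib_right)
  qed
qed

lemma maximal_ideals_comaximal:
  assumes G: "two_sided_ideal G G" "1 \<in> G"
    and m: "maximal_ideal G m" and m': "maximal_ideal G m'" and "m \<noteq> m'"
  shows "comaximal m m'"
proof -
  have I: "two_sided_ideal G m" and I': "two_sided_ideal G m'"
    using m m' unfolding maximal_ideal_def by simp_all
  have sub: "m \<subseteq> m + m'" "m' \<subseteq> m + m'"
    using set_plus_intro[OF _ two_sided_ideal_zero[OF I']] set_plus_intro[OF two_sided_ideal_zero[OF I]]
    by force+
  have "m + m' \<noteq> m"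
  proof
    assume "m + m' = m"
    then have "m = m' \<or> m = G"
      using m' I sub(2) unfolding maximal_ideal_def by simp
    then show False
      using \<open>m \<noteq> m'\<close> m unfolding maximal_ideal_def by auto
  qed
  moreover have "m + m' = m \<or> m + m' = G"
    using m two_sided_ideal_plus[OF G(1) I I'] sub(1) unfolding maximal_ideal_def by blast
  ultimately have "m + m' = G" by blast
  then have "1 \<in> m + m'" using G(2) by simp
  then obtain x y where "1 = x + y" "x \<in> m" "y \<in> m'" by (rule set_plus_elim)
  then show ?thesis
    unfolding comaximal_def by metis
qed

lemma comaximal_ideal_mult:
  assumes "I \<subseteq> G" and J: "two_sided_ideal G J"
    and "comaximal I J" and "comaximal I' J"
  shows "comaximal (ideal_mult I I') J"
proof -
  obtain x y where x: "x \<in> I" "y \<in> J" "x + y = 1"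
    using assms(3) unfolding comaximal_def by blast
  obtain x' y' where x': "x' \<in> I'" "y' \<in> J" "x' + y' = 1"
    using assms(4) unfolding comaximal_def by blast
  have "x * x' + (x * y' + y) = x * (x' + y') + y"
    by (simp add: distrib_left add.assoc)
  also have "\<dots> = 1" using x x' by simp
  finally have "x * x' + (x * y' + y) = 1" .
  moreover have "x * y' + y \<in> J"
    using x x' \<open>I \<subseteq> G\<close>
    by (blast intro: two_sided_ideal_add[OF J] two_sided_ideal_mult_left[OF J])
  ultimately show ?thesis
    using ideal_mult_mem[OF x(1) x'(1)] unfolding comaximal_def by blast
qed

lemma comaximal_ideal_prod:
  assumes "1 \<in> G" and J: "two_sided_ideal G J"
    and "\<forall>m\<in>set ms. m \<subseteq> G \<and> comaximal m J"
  shows "comaximal (ideal_prod G ms) J"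
  using assms(3)
proof (induction ms)
  case Nil
  show ?case
    using \<open>1 \<in> G\<close> two_sided_ideal_zero[OF J] unfolding comaximal_def
    by (metis add.right_neutral ideal_prod.simps(1))
next
  case (Cons m ms)
  then show ?case using comaximal_ideal_mult[OF _ J] by simp
qed

definition submodule :: "('a::ring_1 \<Rightarrow> 'v::ab_group_add \<Rightarrow> 'v) \<Rightarrow> ('v \<Rightarrow> bool) \<Rightarrow> bool" where
  "submodule act N \<longleftrightarrow>
     N 0 \<and> (\<forall>x y. N x \<longrightarrow> N y \<longrightarrow> N (x + y)) \<and> (\<forall>a x. N x \<longrightarrow> N (act a x))"

context
  fixes act :: "'a::ring_1 \<Rightarrow> 'v::ab_group_add \<Rightarrow> 'v" and N :: "'v \<Rightarrow> bool"
  assumes N: "submodule act N"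
begin

lemma submodule_zero: "N 0"
  using N unfolding submodule_def by blast

lemma submodule_add: "N x \<Longrightarrow> N y \<Longrightarrow> N (x + y)"
  using N unfolding submodule_def by blast

lemma submodule_act: "N x \<Longrightarrow> N (act a x)"
  using N unfolding submodule_def by blast

lemma submodule_sum: "\<forall>i\<in>S. N (h i) \<Longrightarrow> N (sum h S)"
  by (induction S rule: infinite_finite_induct) (auto intro: submodule_zero submodule_add)

lemma block_sumI:
  assumes "finite Fs"
    and "\<forall>C\<in>Fs \<inter> Cs. g C \<in> part G act N C" and "\<forall>C\<in>Fs - Cs. N (g C)"
    and "N (u - (\<Sum>C\<in>Fs. g C))"
  shows "u \<in> block_sum G act N Cs"
proof -
  have eq: "u - (\<Sum>C\<in>Fs \<inter> Cs. g C) = (u - (\<Sum>C\<in>Fs. g C)) + (\<Sum>C\<in>Fs - Cs. g C)"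
    using sum.Int_Diff[OF \<open>finite Fs\<close>, of g Cs] by (simp add: algebra_simps)
  have "N ((u - (\<Sum>C\<in>Fs. g C)) + (\<Sum>C\<in>Fs - Cs. g C))"
    by (rule submodule_add[OF assms(4) submodule_sum[OF assms(3)]])
  then have "N (u - (\<Sum>C\<in>Fs \<inter> Cs. g C))"
    by (simp only: eq)
  then show ?thesis
    unfolding block_sum_def using assms(1,2)
    by (intro CollectI exI[of _ "Fs \<inter> Cs"] exI[of _ g]) auto
qed

end

lemma not_in_Supp:
  assumes "C \<in> cfs scale G // R" and "C \<notin> Supp scale G R act N" and "u \<in> part G act N C"
  shows "N u"
  using assms unfolding Supp_def by blast

inductive gen_submodule :: "('a::ring_1 \<Rightarrow> 'v::ab_group_add \<Rightarrow> 'v) \<Rightarrow> ('v \<Rightarrow> bool) \<Rightarrow> 'v set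
    \<Rightarrow> 'v \<Rightarrow> bool"
  for act N X where
  gen_submodule_base: "N u \<Longrightarrow> gen_submodule act N X u"
| gen_submodule_gen: "x \<in> X \<Longrightarrow> gen_submodule act N X (act a x)"
| gen_submodule_add: "gen_submodule act N X u \<Longrightarrow> gen_submodule act N X u'
    \<Longrightarrow> gen_submodule act N X (u + u')"

(* N + sum_{C in Cs} V(C), with V(C) taken modulo N; unlike block_sum, a block may contribute
   several summands *)
inductive block_span :: "'a::ring_1 set \<Rightarrow> ('a \<Rightarrow> 'v::ab_group_add \<Rightarrow> 'v) \<Rightarrow> ('v \<Rightarrow> bool)
    \<Rightarrow> 'a set set set \<Rightarrow> 'v \<Rightarrow> bool"
  for G act N Cs where
  block_span_base: "N u \<Longrightarrow> block_span G act N Cs u"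
| block_span_part_add: "C \<in> Cs \<Longrightarrow> g \<in> part G act N C \<Longrightarrow> block_span G act N Cs u
    \<Longrightarrow> block_span G act N Cs (g + u)"

context
  fixes act :: "'a::ring_1 \<Rightarrow> 'v::ab_group_add \<Rightarrow> 'v" and N :: "'v \<Rightarrow> bool"
  assumes N: "submodule act N"
begin

lemma block_span_add_right:
  assumes "block_span G act N Cs u" and "N e"
  shows "block_span G act N Cs (u + e)"
  using assms(1)
proof (induction rule: block_span.induct)
  case (block_span_base u)
  then show ?case using submodule_add[OF N _ \<open>N e\<close>] by (blast intro: block_span.intros)
next
  case (block_span_part_add C g u)
  then show ?case using block_span.block_span_part_add[of C Cs g] by (simp add: add.assoc)
qed

lemma block_span_add:
  assumes "block_span G act N Cs u" and "block_span G act N Cs u'"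
  shows "block_span G act N Cs (u + u')"
  using assms(1)
proof (induction rule: block_span.induct)
  case (block_span_base u)
  have "block_span G act N Cs (u' + u)"
    by (rule block_span_add_right[OF assms(2) block_span_base])
  then show ?case by (simp add: add.commute)
next
  case (block_span_part_add C g u)
  then show ?case using block_span.block_span_part_add[of C Cs g] by (simp add: add.assoc)
qed

lemma block_span_sum:
  "\<forall>C\<in>Fs. block_span G act N Cs (g C) \<Longrightarrow> block_span G act N Cs (\<Sum>C\<in>Fs. g C)"
  by (induction Fs rule: infinite_finite_induct)
    (auto intro: block_span_base submodule_zero[OF N] block_span_add)

lemma block_span_cong:
  assumes "block_span G act N Cs u'" and "N (u - u')"
  shows "block_span G act N Cs u"
  using block_span_add_right[OF assms] by simp

end

locale left_module =
  fixes act :: "'a::ring_1 \<Rightarrow> 'v::ab_group_add \<Rightarrow> 'v"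
  assumes A_module: "A_module act"
begin

lemma act_add: "act (a + b) x = act a x + act b x"
  using A_module unfolding A_module_def by blast

lemma act_add_right: "act a (x + y) = act a x + act a y"
  using A_module unfolding A_module_def by blast

lemma act_mult: "act (a * b) x = act a (act b x)"
  using A_module unfolding A_module_def by blast

lemma act_one: "act 1 x = x"
  using A_module unfolding A_module_def by blast

lemma act_zero: "act 0 x = 0"
  using act_add[of 0 0 x] by simp

lemma act_neg: "act (- a) x = - act a x"
  using act_add[of a "- a" x] by (simp add: act_zero eq_neg_iff_add_eq_0 add.commute)

lemma act_diff: "act (a - b) x = act a x - act b x"
  using act_add[of a "- b" x] by (simp add: act_neg)

lemma act_sum: "act (sum f S) x = (\<Sum>i\<in>S. act (f i) x)"
  by (induction S rule: infinite_finite_induct) (auto simp: act_zero act_add)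

lemma submodule_eq_zero: "submodule act (\<lambda>w. w = 0)"
  unfolding submodule_def using act_add_right[of _ 0 0] by auto

lemma submodule_diff:
  assumes "submodule act N" "N x" "N y"
  shows "N (x - y)"
  using submodule_add[OF assms(1,2) submodule_act[OF assms(1,3), of "- 1"]]
  by (simp add: act_neg act_one)

lemma submodule_gen_submodule:
  assumes N: "submodule act N"
  shows "submodule act (gen_submodule act N X)"
proof -
  have "gen_submodule act N X (act c u)" if "gen_submodule act N X u" for c u
    using that
  proof (induction rule: gen_submodule.induct)
    case (gen_submodule_base u)
    then show ?case by (intro gen_submodule.gen_submodule_base submodule_act[OF N])
  next
    case (gen_submodule_gen x a)
    then show ?case by (simp add: gen_submodule.intros flip: act_mult)
  next
    case (gen_submodule_add u u')
    then show ?case by (simp add: gen_submodule.intros act_add_right)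
  qed
  then show ?thesis
    unfolding submodule_def
    using gen_submodule.gen_submodule_base[of N 0, OF submodule_zero[OF N]] gen_submodule_add
    by blast
qed

lemma ideal_mult_annihilates:
  assumes N: "submodule act N" and "t \<in> ideal_mult UNIV I" and "\<forall>y\<in>I. N (act y x)"
  shows "N (act t x)"
  using assms(2)
proof (induction rule: ideal_mult_induct)
  case zero
  show ?case using submodule_zero[OF N] by (simp add: act_zero)
next
  case (add_mult a b y)
  then show ?case
    using submodule_add[OF N submodule_act[OF N] add_mult(3)] assms(3)
    by (simp add: act_add act_mult)
qed

lemma annihilates_act_complement:
  assumes N: "submodule act N" and w: "two_sided_ideal G w"
    and "x \<in> w" and "x + y = 1" and kill: "\<forall>t\<in>w. N (act t u)"
  shows "\<forall>t\<in>w. N (act t (act y u))"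
proof
  fix t assume t: "t \<in> w"
  have "t * x \<in> w"
    using two_sided_ideal_mult_right[OF w _ t] two_sided_ideal_subset[OF w] \<open>x \<in> w\<close> by blast
  moreover have "t * y = t - t * x"
    using \<open>x + y = 1\<close> by (metis add_diff_cancel_left' distrib_left mult.right_neutral)
  then have "act t (act y u) = act t u - act (t * x) u"
    by (simp flip: act_mult act_diff)
  ultimately show "N (act t (act y u))"
    using kill t submodule_diff[OF N] by simp
qed

end

locale block_setting =
  fixes scale :: "'k::field \<Rightarrow> 'a::ring_1 \<Rightarrow> 'a" and G :: "'a set"
    and R :: "('a set \<times> 'a set) set"
  assumes k_algebra: "k_algebra scale" and subalgebra: "subalgebra scale G"
    and equiv: "equiv (cfs scale G) R"
begin

lemma one_mem: "1 \<in> G"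
  using subalgebra unfolding subalgebra_def by blast

lemma two_sided_ideal_self: "two_sided_ideal G G"
proof -
  have "- x \<in> G" if "x \<in> G" for x
  proof -
    interpret vector_space scale
      using k_algebra unfolding k_algebra_def by blast
    have "scale (- 1) x \<in> G"
      using subalgebra that unfolding subalgebra_def by blast
    then show ?thesis by simp
  qed
  then show ?thesis
    using subalgebra unfolding subalgebra_def by (intro two_sided_idealI) auto
qed

lemma cfs_of_block: "C \<in> cfs scale G // R \<Longrightarrow> m \<in> C \<Longrightarrow> m \<in> cfs scale G"
  using in_quotient_imp_subset[OF equiv] by blast

lemma maximal_ideal_of_block:
  assumes "C \<in> cfs scale G // R" and "m \<in> C"
  shows "maximal_ideal G m"
  using cfs_of_block[OF assms] unfolding cfs_def by blast

lemma two_sided_ideal_of_block: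
  assumes "C \<in> cfs scale G // R" and "m \<in> C"
  shows "two_sided_ideal G m"
  using maximal_ideal_of_block[OF assms] unfolding maximal_ideal_def by simp

lemma two_sided_ideal_word:
  assumes C: "C \<in> cfs scale G // R" and "w \<in> words G C"
  shows "two_sided_ideal G w"
proof -
  obtain ms where "w = ideal_prod G ms" "set ms \<subseteq> C"
    using \<open>w \<in> words G C\<close> unfolding words_def by blast
  then show ?thesis
    using two_sided_ideal_ideal_prod[OF two_sided_ideal_self] two_sided_ideal_of_block[OF C] by blast
qed

lemma comaximal_words:
  assumes C: "C \<in> cfs scale G // R" and D: "D \<in> cfs scale G // R" and "C \<noteq> D"
    and w: "w \<in> words G C" and w': "w' \<in> words G D"
  shows "comaximal w w'"
proof -
  obtain ms where ms: "w = ideal_prod G ms" "set ms \<subseteq> C"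
    using w unfolding words_def by blast
  obtain ms' where ms': "w' = ideal_prod G ms'" "set ms' \<subseteq> D"
    using w' unfolding words_def by blast
  have pairwise: "comaximal m m'" if m: "m \<in> C" and m': "m' \<in> D" for m m'
  proof (rule maximal_ideals_comaximal[OF two_sided_ideal_self one_mem])
    show "maximal_ideal G m" "maximal_ideal G m'"
      using maximal_ideal_of_block[OF C m] maximal_ideal_of_block[OF D m'] .
    show "m \<noteq> m'"
      using quotient_disj[OF equiv C D] \<open>C \<noteq> D\<close> m m' by blast
  qed
  have factor: "comaximal m w'" if m: "m \<in> C" for m
  proof -
    have "m' \<subseteq> G \<and> comaximal m' m" if m': "m' \<in> set ms'" for m'
    proof
      have "m' \<in> D" using m' ms'(2) by blast
      then show "m' \<subseteq> G" "comaximal m' m"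
        using two_sided_ideal_subset[OF two_sided_ideal_of_block[OF D]] comaximal_sym[OF pairwise[OF m]]
        by blast+
    qed
    then have "comaximal w' m"
      unfolding ms'(1) by (intro comaximal_ideal_prod[OF one_mem two_sided_ideal_of_block[OF C m]]) blast
    then show ?thesis by (rule comaximal_sym)
  qed
  have "m \<subseteq> G \<and> comaximal m w'" if "m \<in> set ms" for m
    using that ms(2) factor two_sided_ideal_subset[OF two_sided_ideal_of_block[OF C]] by blast
  then show ?thesis
    unfolding ms(1) by (intro comaximal_ideal_prod[OF one_mem two_sided_ideal_word[OF D w']]) blast
qed

end

locale block_action = block_setting scale G R + left_module act
  for scale :: "'k::field \<Rightarrow> 'a::ring_1 \<Rightarrow> 'a" and G R and act :: "'a \<Rightarrow> 'v::ab_group_add \<Rightarrow> 'v"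
begin

lemma annihilated_add_part:
  assumes N: "submodule act N" and C: "C \<in> cfs scale G // R" and w: "w \<in> words G C"
    and D: "D \<in> cfs scale G // R" "C \<noteq> D" and g: "g \<in> part G act N D"
    and a: "a \<in> G" and kill: "\<forall>t\<in>w. N (act t (act a (g + u)))"
    and IH: "\<forall>b\<in>G. (\<forall>t\<in>w. N (act t (act b u))) \<longrightarrow> N (act b u)"
  shows "N (act a (g + u))"
proof -
  obtain wD where wD: "wD \<in> words G D" and kill_g: "\<forall>t\<in>wD. N (act t g)"
    using g unfolding part_def by blast
  obtain x y where xy: "x \<in> w" "y \<in> wD" "x + y = 1"
    using comaximal_words[OF C D w wD] unfolding comaximal_def by blast
  have wD_ideal: "two_sided_ideal G wD" by (rule two_sided_ideal_word[OF D(1) wD])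
  have ya: "y * a \<in> wD" by (rule two_sided_ideal_mult_right[OF wD_ideal a xy(2)])
  then have "y * a \<in> G" using two_sided_ideal_subset[OF wD_ideal] by blast
  have y_split: "act y (act a (g + u)) = act (y * a) g + act (y * a) u"
    by (simp add: act_mult act_add_right)
  have Ng: "N (act (y * a) g)" using kill_g ya by blast
  have "\<forall>t\<in>w. N (act t (act (y * a) u))"
  proof
    fix t assume t: "t \<in> w"
    have "N (act t (act y (act a (g + u))))"
      using annihilates_act_complement[OF N two_sided_ideal_word[OF C w] xy(1,3) kill] t by blast
    moreover have "N (act t (act (y * a) g))"
      using submodule_act[OF N Ng] .
    moreover have "act t (act (y * a) u) = act t (act y (act a (g + u))) - act t (act (y * a) g)"
      unfolding y_split by (simp add: act_add_right)
    ultimately show "N (act t (act (y * a) u))"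
      using submodule_diff[OF N] by simp
  qed
  then have "N (act (y * a) u)"
    by (rule bspec[OF IH \<open>y * a \<in> G\<close>, THEN mp])
  then have Ny: "N (act y (act a (g + u)))"
    unfolding y_split by (rule submodule_add[OF N Ng])
  have Nx: "N (act x (act a (g + u)))" using kill xy(1) by blast
  have "N (act x (act a (g + u)) + act y (act a (g + u)))"
    by (rule submodule_add[OF N Nx Ny])
  moreover have "act x (act a (g + u)) + act y (act a (g + u)) = act a (g + u)"
    by (simp only: act_add[symmetric] xy(3) act_one)
  ultimately show ?thesis by simp
qed

lemma block_span_part_zero:
  assumes N: "submodule act N" and C: "C \<in> cfs scale G // R"
    and Cs: "Cs \<subseteq> cfs scale G // R" "C \<notin> Cs"
    and span: "block_span G act N Cs u" and u: "u \<in> part G act N C"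
  shows "N u"
proof -
  obtain w where w: "w \<in> words G C" and kill: "\<forall>t\<in>w. N (act t u)"
    using u unfolding part_def by blast
  \<comment> \<open>Generalised over G-multiples of u: the induction step passes from u to (y a) u.\<close>
  have "\<forall>a\<in>G. (\<forall>t\<in>w. N (act t (act a u))) \<longrightarrow> N (act a u)"
    using span
  proof (induction rule: block_span.induct)
    case (block_span_base u)
    then show ?case using submodule_act[OF N] by blast
  next
    case (block_span_part_add D g u)
    have "D \<in> cfs scale G // R" "C \<noteq> D"
      using block_span_part_add(1) Cs by blast+
    then show ?case
      using annihilated_add_part[OF N C w _ _ block_span_part_add(2) _ _ block_span_part_add.IH]
      by blast
  qed
  then have "(\<forall>t\<in>w. N (act t (act 1 u))) \<longrightarrow> N (act 1 u)"
    using one_mem by blast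
  then show "N u" using kill by (simp add: act_one)
qed

end

locale HC_action = block_action scale G R act
  for scale :: "'k::field \<Rightarrow> 'a::ring_1 \<Rightarrow> 'a" and G R and act :: "'a \<Rightarrow> 'v::ab_group_add \<Rightarrow> 'v" +
  assumes HC: "HC_block_subalgebra scale G R"
begin

lemma act_block_decomposition:
  assumes N: "submodule act N" and B: "B \<in> cfs scale G // R" and w: "w \<in> words G B"
    and kill: "\<forall>y\<in>w. N (act y x)"
  obtains Fs f where "finite Fs" and "Fs \<subseteq> cfs scale G // R"
    and "\<And>C. C \<in> Fs \<Longrightarrow> f C \<in> part G (*) (\<lambda>t. t \<in> ideal_mult UNIV w) C"
    and "\<And>C. C \<in> Fs \<Longrightarrow> act (f C) x \<in> part G act N C"
    and "N (act a x - (\<Sum>C\<in>Fs. act (f C) x))"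
proof -
  have "a \<in> block_sum G (*) (\<lambda>t. t \<in> ideal_mult UNIV w) (cfs scale G // R)"
    using HC B w unfolding HC_block_subalgebra_def block_module_def by blast
  then obtain Fs f where Fs: "finite Fs" "Fs \<subseteq> cfs scale G // R"
    and f: "\<And>C. C \<in> Fs \<Longrightarrow> f C \<in> part G (*) (\<lambda>t. t \<in> ideal_mult UNIV w) C"
    and a: "a - (\<Sum>C\<in>Fs. f C) \<in> ideal_mult UNIV w"
    unfolding block_sum_def by blast
  have fx: "act (f C) x \<in> part G act N C" if C: "C \<in> Fs" for C
  proof -
    obtain w' where w': "w' \<in> words G C" and fw: "\<forall>y\<in>w'. y * f C \<in> ideal_mult UNIV w"
      using f[OF C] unfolding part_def by blast
    have "N (act y (act (f C) x))" if "y \<in> w'" for y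
      using ideal_mult_annihilates[OF N fw[rule_format, OF that] kill] by (simp add: act_mult)
    then show ?thesis
      using w' unfolding part_def by blast
  qed
  have "N (act a x - (\<Sum>C\<in>Fs. act (f C) x))"
    using ideal_mult_annihilates[OF N a kill] by (simp add: act_diff act_sum)
  with Fs f fx show thesis by (rule that)
qed

lemma block_span_Supp:
  assumes N: "submodule act N" and m: "m \<in> cfs scale G" and kill: "\<forall>y\<in>m. N (act y x)"
  shows "block_span G act N (Supp scale G R (*) (\<lambda>t. t \<in> ideal_mult UNIV m)) (act a x)"
proof -
  let ?S = "Supp scale G R (*) (\<lambda>t. t \<in> ideal_mult UNIV m)"
  have B: "R `` {m} \<in> cfs scale G // R" using m by (rule quotientI)
  have "two_sided_ideal G m"
    using m unfolding cfs_def maximal_ideal_def by simp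
  then have "ideal_prod G [m] = m"
    by (rule ideal_prod_singleton[OF _ one_mem])
  moreover have "set [m] \<subseteq> R `` {m}"
    using equiv_class_self[OF equiv m] by simp
  ultimately have m_word: "m \<in> words G (R `` {m})"
    unfolding words_def by blast
  obtain Fs f where Fs: "finite Fs" "Fs \<subseteq> cfs scale G // R"
    and f: "\<And>C. C \<in> Fs \<Longrightarrow> f C \<in> part G (*) (\<lambda>t. t \<in> ideal_mult UNIV m) C"
    and fx: "\<And>C. C \<in> Fs \<Longrightarrow> act (f C) x \<in> part G act N C"
    and decomp: "N (act a x - (\<Sum>C\<in>Fs. act (f C) x))"
    using act_block_decomposition[OF N B m_word kill, where a = a] by blast
  have "\<forall>C\<in>Fs. block_span G act N ?S (act (f C) x)"
  proof
    fix C assume C: "C \<in> Fs"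
    show "block_span G act N ?S (act (f C) x)"
    proof (cases "C \<in> ?S")
      case True
      have "block_span G act N ?S 0"
        by (rule block_span_base) (rule submodule_zero[OF N])
      then have "block_span G act N ?S (act (f C) x + 0)"
        by (rule block_span_part_add[OF True fx[OF C]])
      then show ?thesis by simp
    next
      case False
      have "C \<in> cfs scale G // R" using Fs(2) C by blast
      then have "f C \<in> ideal_mult UNIV m"
        using False f[OF C] by (rule not_in_Supp)
      then have "N (act (f C) x)"
        by (rule ideal_mult_annihilates[OF N _ kill])
      then show ?thesis by (rule block_span_base)
    qed
  qed
  then have "block_span G act N ?S (\<Sum>C\<in>Fs. act (f C) x)"
    by (rule block_span_sum[OF N])
  then show ?thesis
    by (rule block_span_cong[OF N _ decomp])
qed

lemma part_vanishes_outside_Supp: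
  assumes "submodule act N" and "set ms \<subseteq> cfs scale G"
    and "\<forall>p\<in>ideal_prod G ms. N (act p v)"
    and "C \<in> cfs scale G // R"
    and "C \<notin> (\<Union>m\<in>set ms. Supp scale G R (*) (\<lambda>t. t \<in> ideal_mult UNIV m))"
    and "act f v \<in> part G act N C"
  shows "N (act f v)"
  using assms
proof (induction ms arbitrary: N)
  case Nil
  have "N (act 1 v)" using Nil.prems(3) one_mem by simp
  then have "N v" by (simp add: act_one)
  then show ?case by (rule submodule_act[OF Nil.prems(1)])
next
  case (Cons m ms)
  note N = Cons.prems(1)
  let ?S = "Supp scale G R (*) (\<lambda>t. t \<in> ideal_mult UNIV m)"
  define N' where "N' = gen_submodule act N ((\<lambda>p. act p v) ` ideal_prod G ms)"
  have N': "submodule act N'"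
    unfolding N'_def by (rule submodule_gen_submodule[OF N])
  have fv: "N' (act f v)"
  proof (rule Cons.IH[OF N'])
    show "set ms \<subseteq> cfs scale G" using Cons.prems(2) by simp
    show "\<forall>p\<in>ideal_prod G ms. N' (act p v)"
    proof
      fix p assume "p \<in> ideal_prod G ms"
      then have "N' (act 1 (act p v))"
        unfolding N'_def by (intro gen_submodule_gen) (rule imageI)
      then show "N' (act p v)" by (simp add: act_one)
    qed
    show "C \<in> cfs scale G // R" by (rule Cons.prems(4))
    show "C \<notin> (\<Union>m\<in>set ms. Supp scale G R (*) (\<lambda>t. t \<in> ideal_mult UNIV m))"
      using Cons.prems(5) by simp
    show "act f v \<in> part G act N' C"
      using Cons.prems(6) gen_submodule_base[of N _ act] unfolding part_def N'_def by blast
  qed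
  have span: "block_span G act N ?S u" if "N' u" for u
    using that unfolding N'_def
  proof (induction rule: gen_submodule.induct)
    case (gen_submodule_base u)
    then show ?case by (rule block_span_base)
  next
    case (gen_submodule_gen x a)
    then obtain p where p: "p \<in> ideal_prod G ms" "x = act p v" by blast
    have "\<forall>y\<in>m. N (act y x)"
    proof
      fix y assume "y \<in> m"
      then have "y * p \<in> ideal_prod G (m # ms)"
        using ideal_mult_mem p(1) by simp
      then have "N (act (y * p) v)"
        using Cons.prems(3) by blast
      then show "N (act y x)"
        using p(2) by (simp add: act_mult)
    qed
    moreover have "m \<in> cfs scale G" using Cons.prems(2) by simp
    ultimately show ?case by (rule block_span_Supp[OF N, rotated])
  next
    case (gen_submodule_add u u')
    then show ?case by (intro block_span_add[OF N])
  qed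
  have "?S \<subseteq> cfs scale G // R"
    unfolding Supp_def by (rule Collect_subset)
  moreover have "C \<notin> ?S" using Cons.prems(5) by simp
  ultimately show ?case
    by (rule block_span_part_zero[OF N Cons.prems(4) _ _ span[OF fv] Cons.prems(6)])
qed

end

theorem mainTheorem10:
  fixes scale :: "'k::field \<Rightarrow> 'a::ring_1 \<Rightarrow> 'a" and G :: "'a set"
    and R :: "('a set \<times> 'a set) set"
    and act :: "'a \<Rightarrow> 'v::ab_group_add \<Rightarrow> 'v" and v :: 'v
    and B :: "'a set set" and ms :: "'a set list"
  assumes "k_algebra scale" and "subalgebra scale G"
    and "equiv (cfs scale G) R"
    and "HC_block_subalgebra scale G R"
    and "A_module act"
    and "B \<in> cfs scale G // R" and "set ms \<subseteq> B"
    and "\<forall>x \<in> ideal_prod G ms. act x v = 0"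
  shows "\<forall>a. act a v \<in> block_sum G act (\<lambda>w. w = 0)
            (\<Union>m \<in> set ms. Supp scale G R (*) (\<lambda>x. x \<in> ideal_mult UNIV m))"
proof -
  interpret HC_action scale G R act
    using assms(1-5)
    unfolding HC_action_def HC_action_axioms_def block_action_def block_setting_def left_module_def
    by blast
  let ?S = "\<Union>m \<in> set ms. Supp scale G R (*) (\<lambda>x. x \<in> ideal_mult UNIV m)"
  have ms: "set ms \<subseteq> cfs scale G"
    using assms(6,7) cfs_of_block by blast
  have P: "ideal_prod G ms \<in> words G B"
    using assms(7) unfolding words_def by blast
  show ?thesis
  proof
    fix a
    obtain Fs f where Fs: "finite Fs" "Fs \<subseteq> cfs scale G // R"
      and fv: "\<And>C. C \<in> Fs \<Longrightarrow> act (f C) v \<in> part G act (\<lambda>w. w = 0) C"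
      and decomp: "act a v - (\<Sum>C\<in>Fs. act (f C) v) = 0"
      using act_block_decomposition[OF submodule_eq_zero assms(6) P assms(8), where a = a] by metis
    have "act (f C) v = 0" if "C \<in> Fs - ?S" for C
      using part_vanishes_outside_Supp[OF submodule_eq_zero ms assms(8) _ _ fv] that Fs(2) by blast
    then show "act a v \<in> block_sum G act (\<lambda>w. w = 0) ?S"
      using block_sumI[OF submodule_eq_zero Fs(1) _ _ decomp] fv by blast
  qed
qed

end
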